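(* Let $K$ and $L$ be positive integers. Consider the $K$-user SISO interference channel with symbol extension factor $L$ and no CSIT, as described in the context. Then the maximum achievable SpAC is $\frac{L-K+1}{L}$.
   Context: Model: $K$ single-antenna transmitters and $K$ single-antenna receivers; transmitter $i$ has a message only for receiver $i$. Over $L$ channel uses, receiver $l$ observes $\mathbf{y}_l=\sum_{i=1}^K\mathbf{H}_{l,i}\mathbf{Q}_i\mathbf{x}_i+\mathbf{n}_l\in\mathbb{C}^{L}$, where $\mathbf{H}_{l,i}\in\mathbb{C}^{L\times L}$ is diagonal with the channel coefficients $h_{l,i}(t)$, $t=1,\dots,L$ (independent across pairs $(l,i)$), $\mathbf{x}_i\in\mathbb{C}^d$ is the finite-alphabet symbol vector of transmitter $i$, $\mathbf{Q}_i\in\mathbb{C}^{L\times d}$ its precoder (rank $d$), and $\mathbf{n}_l$ Gaussian noise. No CSIT: the precoders are fixed and independent of the channel coefficients. A value $d$ is achievable if there exist channel-independent precoders such that, for almost every realization of the channel coefficients, for every receiver $l$: (a) $\sum_{i=1}^K\mathrm{span}(\mathbf{H}_{l,i}\mathbf{Q}_i)=\mathbb{C}^{L}$, and (b) $\mathrm{span}(\mathbf{H}_{l,l}\mathbf{Q}_l)\not\subseteq\sum_{i\ne l}\mathrm{span}(\mathbf{H}_{l,i}\mathbf{Q}_i)$. The SpAC is $d/L$, and the maximum achievable SpAC is the maximum of $d/L$ over achievable $d$. *)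

theory Defs
  imports "HOL-Analysis.Analysis"
begin

text \<open>Users/receivers are indexed by 0..K-1, channel uses by 0..L-1.
  A channel realization is h :: nat \<times> nat \<times> nat \<Rightarrow> complex, h (l,i,t) = h_{l,i}(t),
  i.e. the diagonal entry t of H_{l,i}. A precoder family is
  Q :: nat \<Rightarrow> nat \<Rightarrow> nat \<Rightarrow> complex, Q i t j = entry (t,j) of the L x d matrix Q_i.\<close>

text \<open>Column j of H_{l,i} Q_i combined with coefficients c: the vector
  H_{l,i} Q_i c, evaluated at time t.\<close>
definition HQc :: "nat \<Rightarrow> (nat \<times> nat \<times> nat \<Rightarrow> complex) \<Rightarrow> (nat \<Rightarrow> nat \<Rightarrow> nat \<Rightarrow> complex)
                    \<Rightarrow> nat \<Rightarrow> nat \<Rightarrow> (nat \<Rightarrow> complex) \<Rightarrow> nat \<Rightarrow> complex" where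
  "HQc d h Q l i c t = h (l, i, t) * (\<Sum>j<d. Q i t j * c j)"

definition full_col_rank :: "nat \<Rightarrow> nat \<Rightarrow> (nat \<Rightarrow> nat \<Rightarrow> complex) \<Rightarrow> bool" where
  "full_col_rank L d M \<longleftrightarrow>
     (\<forall>c :: nat \<Rightarrow> complex. (\<forall>t<L. (\<Sum>j<d. M t j * c j) = 0) \<longrightarrow> (\<forall>j<d. c j = 0))"

text \<open>Condition (a): sum_i span(H_{l,i} Q_i) = C^L.\<close>
definition cond_a :: "nat \<Rightarrow> nat \<Rightarrow> nat \<Rightarrow> (nat \<times> nat \<times> nat \<Rightarrow> complex)
                       \<Rightarrow> (nat \<Rightarrow> nat \<Rightarrow> nat \<Rightarrow> complex) \<Rightarrow> nat \<Rightarrow> bool" where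
  "cond_a K L d h Q l \<longleftrightarrow>
     (\<forall>y :: nat \<Rightarrow> complex. \<exists>c :: nat \<Rightarrow> nat \<Rightarrow> complex.
        \<forall>t<L. y t = (\<Sum>i<K. HQc d h Q l i (c i) t))"

text \<open>Condition (b): span(H_{l,l} Q_l) is not contained in sum_{i \<noteq> l} span(H_{l,i} Q_i).\<close>
definition cond_b :: "nat \<Rightarrow> nat \<Rightarrow> nat \<Rightarrow> (nat \<times> nat \<times> nat \<Rightarrow> complex)
                       \<Rightarrow> (nat \<Rightarrow> nat \<Rightarrow> nat \<Rightarrow> complex) \<Rightarrow> nat \<Rightarrow> bool" where
  "cond_b K L d h Q l \<longleftrightarrow>
     (\<exists>c :: nat \<Rightarrow> complex. \<not> (\<exists>c' :: nat \<Rightarrow> nat \<Rightarrow> complex.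
        \<forall>t<L. HQc d h Q l l c t = (\<Sum>i\<in>{..<K} - {l}. HQc d h Q l i (c' i) t)))"

text \<open>Joint law of the channel coefficients: Lebesgue measure on C^(K*K*L)
  (independent coordinates); "almost every realization" is w.r.t. this measure.\<close>
definition chan_measure :: "nat \<Rightarrow> nat \<Rightarrow> (nat \<times> nat \<times> nat \<Rightarrow> complex) measure" where
  "chan_measure K L = PiM ({..<K} \<times> {..<K} \<times> {..<L}) (\<lambda>_. (lborel :: complex measure))"

definition achievable :: "nat \<Rightarrow> nat \<Rightarrow> nat \<Rightarrow> bool" where
  "achievable K L d \<longleftrightarrow>
     (\<exists>Q :: nat \<Rightarrow> nat \<Rightarrow> nat \<Rightarrow> complex.
        (\<forall>i<K. full_col_rank L d (Q i)) \<and>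
        (AE h in chan_measure K L. \<forall>l<K. cond_a K L d h Q l \<and> cond_b K L d h Q l))"

definition SpAC_set :: "nat \<Rightarrow> nat \<Rightarrow> real set" where
  "SpAC_set K L = {real d / real L | d. achievable K L d}"

end

theory Submission
  imports Defs "Jordan_Normal_Form.Determinant"
begin

text \<open>For almost every channel, condition (a) at receiver 0 says that the L x Kd
  receive matrix has full row rank; a Laplace-type selection then attributes each of the L rows to
  one user so that the rows attributed to user i are independent rows of its precoder Q_i, and we
  extend them to a row basis B_i of Q_i, which has at least d elements. Condition (b) at receiver l
  forces some row attributed to l to lie in no B_i with i \<noteq> l: otherwise all rows could be
  attributed to interferers, and then the interference alone would span C^L for generic channels,
  because the corresponding determinant is a continuous function of the channel that does not
  vanish at the 0/1 pattern of the attribution. These private rows of users 1, ..., K-1 are distinct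
  and avoid B_0, so d + K - 1 \<le> L.

  Each user gets one private slot and all users share the remaining L - K slots; every
  receiver then separates its private slot from the interference as soon as no channel coefficient
  vanishes.\<close>

definition indep_rows :: "('r \<Rightarrow> 'c \<Rightarrow> complex) \<Rightarrow> 'r set \<Rightarrow> 'c set \<Rightarrow> bool" where
  "indep_rows f R C \<longleftrightarrow> (\<forall>w. (\<forall>c\<in>C. (\<Sum>t\<in>R. w t * f t c) = 0) \<longrightarrow> (\<forall>t\<in>R. w t = 0))"

lemma indep_rowsI:
  assumes "\<And>w t. \<forall>c\<in>C. (\<Sum>t\<in>R. w t * f t c) = 0 \<Longrightarrow> t \<in> R \<Longrightarrow> w t = 0"
  shows "indep_rows f R C"
  using assms unfolding indep_rows_def by blast

lemma indep_rowsD: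
  assumes "indep_rows f R C" "\<And>c. c \<in> C \<Longrightarrow> (\<Sum>t\<in>R. w t * f t c) = 0" "t \<in> R"
  shows "w t = 0"
  using assms unfolding indep_rows_def by blast

lemma indep_rows_empty [simp]: "indep_rows f {} C"
  by (simp add: indep_rows_def)

lemma indep_rows_subset:
  assumes "finite R" "indep_rows f R C" "R' \<subseteq> R"
  shows "indep_rows f R' C"
proof (rule indep_rowsI)
  fix w t assume H: "\<forall>c\<in>C. (\<Sum>t\<in>R'. w t * f t c) = 0" and t: "t \<in> R'"
  define w' where "w' t = (if t \<in> R' then w t else 0)" for t
  have "(\<Sum>t\<in>R. w' t * f t c) = (\<Sum>t\<in>R'. w' t * f t c)" for c
    using assms by (intro sum.mono_neutral_right) (auto simp: w'_def)
  also have "(\<Sum>t\<in>R'. w' t * f t c) = (\<Sum>t\<in>R'. w t * f t c)" for c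
    by (simp add: w'_def)
  finally have "w' t = 0"
    using H t assms(3) by (intro indep_rowsD[OF assms(2), of w']) auto
  then show "w t = 0" using t by (simp add: w'_def)
qed

lemma indep_rows_cong:
  assumes "indep_rows f R C" "\<And>t c. t \<in> R \<Longrightarrow> c \<in> C \<Longrightarrow> f t c = g t c"
  shows "indep_rows g R C"
proof (rule indep_rowsI)
  fix w t assume "\<forall>c\<in>C. (\<Sum>t\<in>R. w t * g t c) = 0" "t \<in> R"
  moreover have "(\<Sum>t\<in>R. w t * f t c) = (\<Sum>t\<in>R. w t * g t c)" if "c \<in> C" for c
    using assms(2) that by (intro sum.cong) auto
  ultimately show "w t = 0" by (intro indep_rowsD[OF assms(1), of w]) auto
qed

lemma indep_rows_scale_rows:
  assumes "\<And>t. t \<in> R \<Longrightarrow> a t \<noteq> 0"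
  shows "indep_rows (\<lambda>t c. a t * f t c) R C \<longleftrightarrow> indep_rows f R C"
proof
  assume ind: "indep_rows (\<lambda>t c. a t * f t c) R C"
  show "indep_rows f R C"
  proof (rule indep_rowsI)
    fix w t assume H: "\<forall>c\<in>C. (\<Sum>t\<in>R. w t * f t c) = 0" and t: "t \<in> R"
    have "(\<Sum>t\<in>R. w t / a t * (a t * f t c)) = (\<Sum>t\<in>R. w t * f t c)" for c
      using assms by (intro sum.cong) auto
    then have "w t / a t = 0"
      using H t by (intro indep_rowsD[OF ind, of "\<lambda>t. w t / a t"]) auto
    then show "w t = 0" using assms t by simp
  qed
next
  assume ind: "indep_rows f R C"
  show "indep_rows (\<lambda>t c. a t * f t c) R C"
  proof (rule indep_rowsI)
    fix w t assume H: "\<forall>c\<in>C. (\<Sum>t\<in>R. w t * (a t * f t c)) = 0" and t: "t \<in> R"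
    have "(\<Sum>t\<in>R. w t * a t * f t c) = (\<Sum>t\<in>R. w t * (a t * f t c))" for c
      by (simp add: mult.assoc)
    then have "w t * a t = 0"
      using H t by (intro indep_rowsD[OF ind, of "\<lambda>t. w t * a t"]) auto
    then show "w t = 0" using assms t by simp
  qed
qed

lemma indep_rows_reindex_cols:
  assumes "bij_betw \<pi> A C"
  shows "indep_rows (\<lambda>t a. f t (\<pi> a)) R A \<longleftrightarrow> indep_rows f R C"
  using assms unfolding indep_rows_def bij_betw_def by blast

lemma indep_rows_pivot:
  assumes ind: "indep_rows f (insert s R) C" and "s \<notin> R" "finite R"
  obtains c0 where "c0 \<in> C" "f s c0 \<noteq> 0"
    "indep_rows (\<lambda>t c. f t c - f t c0 / f s c0 * f s c) R (C - {c0})"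
proof -
  have "\<exists>c0\<in>C. f s c0 \<noteq> 0"
  proof (rule ccontr)
    assume "\<not> (\<exists>c0\<in>C. f s c0 \<noteq> 0)"
    then have "\<forall>c\<in>C. (\<Sum>t\<in>insert s R. (if t = s then 1 else 0) * f t c) = 0"
      using assms(2,3) by (auto intro!: sum.neutral)
    then have "(if s = s then 1 else 0 :: complex) = 0"
      by (intro indep_rowsD[OF ind, of "\<lambda>t. if t = s then 1 else 0"]) auto
    then show False by simp
  qed
  then obtain c0 where c0: "c0 \<in> C" "f s c0 \<noteq> 0" by blast
  define lam where "lam t = f t c0 / f s c0" for t
  have "indep_rows (\<lambda>t c. f t c - lam t * f s c) R (C - {c0})"
    unfolding indep_rows_def
  proof (intro allI impI)
    fix w assume H: "\<forall>c\<in>C - {c0}. (\<Sum>t\<in>R. w t * (f t c - lam t * f s c)) = 0"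
    have H': "(\<Sum>t\<in>R. w t * (f t c - lam t * f s c)) = 0" if "c \<in> C" for c
    proof (cases "c = c0")
      case True
      then show ?thesis using c0(2) by (simp add: lam_def)
    qed (use H that in simp)
    define w' where "w' t = (if t = s then - (\<Sum>u\<in>R. w u * lam u) else w t)" for t
    have "(\<Sum>t\<in>insert s R. w' t * f t c) = (\<Sum>t\<in>R. w t * (f t c - lam t * f s c))" for c
    proof -
      have "(\<Sum>t\<in>R. w' t * f t c) = (\<Sum>t\<in>R. w t * f t c)"
        using assms(2) by (intro sum.cong) (auto simp: w'_def)
      moreover have "(\<Sum>t\<in>R. w t * (f t c - lam t * f s c))
          = (\<Sum>t\<in>R. w t * f t c - w t * lam t * f s c)"
        by (simp add: right_diff_distrib mult.assoc)
      moreover have "\<dots> = (\<Sum>t\<in>R. w t * f t c) - (\<Sum>t\<in>R. w t * lam t) * f s c"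
        by (simp add: sum_subtractf sum_distrib_right)
      ultimately show ?thesis
        using assms(2,3) by (simp add: w'_def)
    qed
    then have "\<forall>t\<in>insert s R. w' t = 0"
      using H' by (auto intro: indep_rowsD[OF ind, of w'])
    then show "\<forall>t\<in>R. w t = 0" using assms(2) by (auto simp: w'_def split: if_splits)
  qed
  then show thesis using that c0 by (simp add: lam_def)
qed

lemma indep_rows_card_le:
  assumes "finite R" "finite C" "indep_rows f R C"
  shows "card R \<le> card C"
  using assms
proof (induction R arbitrary: C f rule: finite_induct)
  case (insert s R)
  obtain c0 where c0: "c0 \<in> C" "f s c0 \<noteq> 0"
    and ind: "indep_rows (\<lambda>t c. f t c - f t c0 / f s c0 * f s c) R (C - {c0})"
    using insert.prems(2) insert.hyps(2,1) by (rule indep_rows_pivot)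
  have "card R \<le> card (C - {c0})"
    using insert.prems(1) by (intro insert.IH[OF _ ind]) simp
  moreover have "card (C - {c0}) < card C"
    using insert.prems(1) c0(1) by (rule card_Diff1_less)
  ultimately show ?case using insert.hyps by simp
qed simp

lemma indep_rows_solvable:
  assumes "finite R" "finite C" "indep_rows f R C"
  shows "\<exists>x. \<forall>t\<in>R. (\<Sum>c\<in>C. f t c * x c) = y t"
  using assms
proof (induction R arbitrary: C f y rule: finite_induct)
  case (insert s R)
  obtain c0 where c0: "c0 \<in> C" "f s c0 \<noteq> 0"
    and ind: "indep_rows (\<lambda>t c. f t c - f t c0 / f s c0 * f s c) R (C - {c0})"
    using insert.prems(2) insert.hyps(2,1) by (rule indep_rows_pivot)
  define lam where "lam t = f t c0 / f s c0" for t
  \<comment> \<open>Solve the eliminated system for the right-hand side y - lam * y s, then back-substitute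
    the pivot.\<close>
  obtain x' where x': "\<forall>t\<in>R. (\<Sum>c\<in>C - {c0}. (f t c - lam t * f s c) * x' c) = y t - lam t * y s"
    using insert.IH[OF _ ind, where y = "\<lambda>t. y t - lam t * y s"] insert.prems(1)
    unfolding lam_def by auto
  define x where
    "x c = (if c = c0 then (y s - (\<Sum>c\<in>C - {c0}. f s c * x' c)) / f s c0 else x' c)" for c
  have split: "(\<Sum>c\<in>C. g c) = g c0 + (\<Sum>c\<in>C - {c0}. g c)" for g :: "_ \<Rightarrow> complex"
    using insert.prems(1) c0(1) by (rule sum.remove)
  have x_C0: "(\<Sum>c\<in>C - {c0}. g c * x c) = (\<Sum>c\<in>C - {c0}. g c * x' c)" for g
    by (intro sum.cong) (auto simp: x_def)
  have row_s: "(\<Sum>c\<in>C. f s c * x c) = y s"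
    using c0(2) by (subst split) (simp add: x_C0 x_def)
  have "(\<Sum>c\<in>C. f t c * x c) = y t" if "t \<in> R" for t
  proof -
    have "(\<Sum>c\<in>C. f t c * x c)
        = (\<Sum>c\<in>C. (f t c - lam t * f s c) * x c) + lam t * (\<Sum>c\<in>C. f s c * x c)"
      by (simp add: algebra_simps sum_subtractf sum_distrib_left)
    also have "(\<Sum>c\<in>C. (f t c - lam t * f s c) * x c)
        = (\<Sum>c\<in>C - {c0}. (f t c - lam t * f s c) * x' c)"
      using c0(2) by (subst split) (simp add: lam_def x_C0)
    finally show ?thesis using x' that row_s by simp
  qed
  then show ?case using row_s by auto
qed simp

lemma indep_rows_if_solvable:
  assumes "finite R" "\<And>y. \<exists>x. \<forall>t\<in>R. (\<Sum>c\<in>C. f t c * x c) = y t"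
  shows "indep_rows f R C"
proof (rule indep_rowsI)
  fix w t0 assume H: "\<forall>c\<in>C. (\<Sum>t\<in>R. w t * f t c) = 0" and t0: "t0 \<in> R"
  obtain x where x: "\<forall>t\<in>R. (\<Sum>c\<in>C. f t c * x c) = (if t = t0 then 1 else 0)"
    using assms(2)[of "\<lambda>t. if t = t0 then 1 else 0"] by blast
  have "w t0 = (\<Sum>t\<in>R. w t * (if t = t0 then 1 else 0))"
    using assms(1) t0 by (simp add: if_distrib cong: if_cong)
  also have "\<dots> = (\<Sum>t\<in>R. w t * (\<Sum>c\<in>C. f t c * x c))"
    using x by (intro sum.cong) auto
  also have "\<dots> = (\<Sum>t\<in>R. \<Sum>c\<in>C. x c * (w t * f t c))"
    by (simp add: sum_distrib_left mult_ac)
  also have "\<dots> = (\<Sum>c\<in>C. x c * (\<Sum>t\<in>R. w t * f t c))"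
    by (subst sum.swap) (simp add: sum_distrib_left)
  also have "\<dots> = 0" using H by simp
  finally show "w t0 = 0" .
qed


lemma indep_rows_exchange:
  assumes "finite R" "k \<in> R" "indep_rows f R C" "\<forall>c\<in>C. f k c = (\<Sum>i\<in>U. g i c)"
  shows "\<exists>i\<in>U. indep_rows (f(k := g i)) R C"
proof (rule ccontr)
  assume "\<not> ?thesis"
  then have "\<forall>i\<in>U. \<exists>w. (\<forall>c\<in>C. (\<Sum>t\<in>R. w t * (f(k := g i)) t c) = 0) \<and> \<not> (\<forall>t\<in>R. w t = 0)"
    unfolding indep_rows_def by blast
  then obtain W where W: "\<And>i. i \<in> U \<Longrightarrow>
      (\<forall>c\<in>C. (\<Sum>t\<in>R. W i t * (f(k := g i)) t c) = 0) \<and> \<not> (\<forall>t\<in>R. W i t = 0)"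
    by metis
  have split_k: "(\<Sum>t\<in>R. h t) = h k + (\<Sum>t\<in>R - {k}. h t)" for h :: "_ \<Rightarrow> complex"
    using assms(1,2) by (rule sum.remove)
  have W_rest: "(\<Sum>t\<in>R - {k}. W i t * f t c) = - (W i k * g i c)" if "i \<in> U" "c \<in> C" for i c
  proof -
    have "(\<Sum>t\<in>R - {k}. W i t * (f(k := g i)) t c) = (\<Sum>t\<in>R - {k}. W i t * f t c)"
      by (intro sum.cong) auto
    moreover have "(\<Sum>t\<in>R. W i t * (f(k := g i)) t c) = 0" using W that by blast
    ultimately show ?thesis by (subst (asm) split_k) (simp add: add_eq_0_iff)
  qed
  \<comment> \<open>Every dependency must involve row k, since the other rows are independent.\<close>
  have W_k: "W i k \<noteq> 0" if "i \<in> U" for i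
  proof
    assume "W i k = 0"
    then have "\<forall>c\<in>C. (\<Sum>t\<in>R. W i t * f t c) = 0"
      using W_rest[OF that] by (subst split_k) simp
    then have "\<forall>t\<in>R. W i t = 0" using assms(3) unfolding indep_rows_def by blast
    then show False using W[OF that] by blast
  qed
  \<comment> \<open>Summing the normalised dependencies over i gives a dependency of the original rows.\<close>
  define V where "V t = (if t = k then 1 else (\<Sum>i\<in>U. W i t / W i k))" for t
  have "\<forall>c\<in>C. (\<Sum>t\<in>R. V t * f t c) = 0"
  proof
    fix c assume c: "c \<in> C"
    have "(\<Sum>t\<in>R - {k}. V t * f t c) = (\<Sum>t\<in>R - {k}. \<Sum>i\<in>U. (1 / W i k) * (W i t * f t c))"
      by (intro sum.cong) (auto simp: V_def sum_distrib_right)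
    also have "\<dots> = (\<Sum>i\<in>U. (1 / W i k) * (\<Sum>t\<in>R - {k}. W i t * f t c))"
      by (subst sum.swap) (simp add: sum_distrib_left)
    also have "\<dots> = (\<Sum>i\<in>U. - g i c)"
      by (intro sum.cong) (auto simp: W_rest[OF _ c] W_k)
    finally have "(\<Sum>t\<in>R - {k}. V t * f t c) = - (\<Sum>i\<in>U. g i c)" by (simp add: sum_negf)
    then show "(\<Sum>t\<in>R. V t * f t c) = 0"
      by (subst split_k) (simp add: V_def assms(4) c)
  qed
  then have "V k = 0" using assms(2,3) unfolding indep_rows_def by blast
  then show False by (simp add: V_def)
qed

text \<open>A rank version of the generalised Laplace expansion.\<close>

lemma indep_rows_select_summands:
  assumes "finite R" "indep_rows f R C" "\<forall>t\<in>R. \<forall>c\<in>C. f t c = (\<Sum>i\<in>U. g i t c)"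
  shows "\<exists>s. (\<forall>t\<in>R. s t \<in> U) \<and> indep_rows (\<lambda>t. g (s t) t) R C"
proof -
  have "S \<subseteq> R \<Longrightarrow>
      \<exists>s. (\<forall>t\<in>S. s t \<in> U) \<and> indep_rows (\<lambda>t. if t \<in> S then g (s t) t else f t) R C" for S
  proof (induction S rule: infinite_finite_induct)
    case (infinite S)
    then show ?case using assms(1) finite_subset by blast
  next
    case empty
    then show ?case using assms(2) by simp
  next
    case (insert k S)
    then obtain s where s: "\<forall>t\<in>S. s t \<in> U"
      "indep_rows (\<lambda>t. if t \<in> S then g (s t) t else f t) R C"
      by blast
    let ?F = "\<lambda>t. if t \<in> S then g (s t) t else f t"
    have "\<forall>c\<in>C. ?F k c = (\<Sum>i\<in>U. g i k c)" using insert(2,4) assms(3) by auto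
    from indep_rows_exchange[OF assms(1) _ s(2) this] insert(4)
    obtain i where i: "i \<in> U" "indep_rows (?F(k := g i k)) R C" by blast
    have "?F(k := g i k) = (\<lambda>t. if t \<in> insert k S then g ((s(k := i)) t) t else f t)"
      using insert(2) by (auto simp: fun_eq_iff)
    with i s(1) show ?case by (intro exI[of _ "s(k := i)"]) auto
  qed
  from this[OF order_refl] obtain s where
    "\<forall>t\<in>R. s t \<in> U" "indep_rows (\<lambda>t. if t \<in> R then g (s t) t else f t) R C"
    by blast
  then show ?thesis by (intro exI[of _ s]) (auto intro: indep_rows_cong)
qed

lemma indep_rows_extend_basis:
  assumes "finite R0" "T \<subseteq> R0" "indep_rows f T C"
  obtains B where "T \<subseteq> B" "B \<subseteq> R0" "indep_rows f B C"
    "\<forall>t\<in>R0. \<exists>a. \<forall>c\<in>C. f t c = (\<Sum>s\<in>B. a s * f s c)"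
proof -
  let ?P = "\<lambda>B. T \<subseteq> B \<and> B \<subseteq> R0 \<and> indep_rows f B C"
  have "\<forall>B. ?P B \<longrightarrow> card B < Suc (card R0)"
    using assms(1) by (auto simp: less_Suc_eq_le intro: card_mono)
  from ex_has_greatest_nat[of ?P T card, OF _ this] assms
  obtain B where B: "?P B" "\<And>B'. ?P B' \<Longrightarrow> card B' \<le> card B" by auto
  have finB: "finite B" using B(1) assms(1) finite_subset by blast
  have "\<exists>a. \<forall>c\<in>C. f t c = (\<Sum>s\<in>B. a s * f s c)" if t: "t \<in> R0" for t
  proof (cases "t \<in> B")
    case True
    have "(\<Sum>s\<in>B. (if s = t then 1 else 0) * f s c) = (\<Sum>s\<in>B. if s = t then f s c else 0)" for c
      by (intro sum.cong) auto
    then have "\<forall>c\<in>C. f t c = (\<Sum>s\<in>B. (if s = t then 1 else 0) * f s c)"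
      using True finB by simp
    then show ?thesis by (rule exI[of _ "\<lambda>s. if s = t then 1 else 0"])
  next
    case False
    have "\<not> indep_rows f (insert t B) C"
    proof
      assume "indep_rows f (insert t B) C"
      then have "?P (insert t B)" using B(1) t by auto
      then have "card (insert t B) \<le> card B" using B(2) by blast
      then show False using False finB by simp
    qed
    then obtain w where w: "\<forall>c\<in>C. (\<Sum>s\<in>insert t B. w s * f s c) = 0" "\<not> (\<forall>s\<in>insert t B. w s = 0)"
      unfolding indep_rows_def by blast
    have wt: "w t \<noteq> 0"
    proof
      assume "w t = 0"
      then have "\<forall>c\<in>C. (\<Sum>s\<in>B. w s * f s c) = 0" using w(1) False finB by simp
      then have "\<forall>s\<in>B. w s = 0" using B(1) unfolding indep_rows_def by blast
      then show False using w(2) \<open>w t = 0\<close> by blast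
    qed
    have "\<forall>c\<in>C. f t c = (\<Sum>s\<in>B. (- w s / w t) * f s c)"
    proof
      fix c assume c: "c \<in> C"
      have "w t * f t c + (\<Sum>s\<in>B. w s * f s c) = 0" using w(1) c False finB by simp
      then have "f t c = - (\<Sum>s\<in>B. w s * f s c) / w t"
        using wt by (simp add: field_simps add_eq_0_iff)
      also have "\<dots> = (\<Sum>s\<in>B. (- w s / w t) * f s c)"
        by (simp add: sum_divide_distrib sum_negf)
      finally show "f t c = (\<Sum>s\<in>B. (- w s / w t) * f s c)" .
    qed
    then show ?thesis by (rule exI[of _ "\<lambda>s. - w s / w t"])
  qed
  with B(1) that show ?thesis by blast
qed

lemma indep_rows_spanning_cols:
  assumes "indep_rows f R C" "\<forall>c\<in>C. \<exists>a. \<forall>t\<in>R. f t c = (\<Sum>s\<in>C'. a s * f t s)"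
  shows "indep_rows f R C'"
proof (rule indep_rowsI)
  fix w t assume H: "\<forall>c\<in>C'. (\<Sum>t\<in>R. w t * f t c) = 0" and t: "t \<in> R"
  have "(\<Sum>t\<in>R. w t * f t c) = 0" if "c \<in> C" for c
  proof -
    from bspec[OF assms(2) that] obtain a where a: "\<forall>t\<in>R. f t c = (\<Sum>s\<in>C'. a s * f t s)" ..
    have "(\<Sum>t\<in>R. w t * f t c) = (\<Sum>t\<in>R. \<Sum>s\<in>C'. a s * (w t * f t s))"
      by (intro sum.cong) (auto simp: a sum_distrib_left algebra_simps)
    also have "\<dots> = (\<Sum>s\<in>C'. a s * (\<Sum>t\<in>R. w t * f t s))"
      by (subst sum.swap) (simp add: sum_distrib_left)
    also have "\<dots> = 0" using H by simp
    finally show ?thesis .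
  qed
  then show "w t = 0" using t by (intro indep_rowsD[OF assms(1), of w]) auto
qed

lemma indep_cols_card_le_spanning_rows:
  assumes "finite D" "finite B" "indep_rows (\<lambda>j t. A t j) D R"
    "\<forall>t\<in>R. \<exists>a. \<forall>j\<in>D. A t j = (\<Sum>s\<in>B. a s * A s j)"
  shows "card D \<le> card B"
proof -
  have "indep_rows (\<lambda>j t. A t j) D B"
    using assms(3,4) by (rule indep_rows_spanning_cols)
  then show ?thesis using assms(1,2) by (intro indep_rows_card_le)
qed

lemma indep_rows_square_subcols:
  assumes "finite R" "finite D" "indep_rows A R D"
  obtains C where "C \<subseteq> D" "indep_rows A R C" "card C = card R"
proof -
  obtain B where B: "B \<subseteq> D" "indep_rows (\<lambda>j t. A t j) B R"
      "\<forall>j\<in>D. \<exists>a. \<forall>t\<in>R. A t j = (\<Sum>s\<in>B. a s * A t s)"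
    using indep_rows_extend_basis[of D "{}" "\<lambda>j t. A t j" R] assms(2) by auto
  have finB: "finite B" using B(1) assms(2) finite_subset by blast
  have indB: "indep_rows A R B" using assms(3) B(3) by (rule indep_rows_spanning_cols)
  have "card R \<le> card B" using assms(1) finB indB by (rule indep_rows_card_le)
  moreover have "card B \<le> card R" using finB assms(1) B(2) by (rule indep_rows_card_le)
  ultimately show ?thesis using B(1) indB that by simp
qed

lemma indep_rows_block_iff:
  assumes "finite R" "\<And>t. t \<in> R \<Longrightarrow> js t \<in> U"
  shows "indep_rows (\<lambda>t (i, j). if js t = i then A i t j else 0) R (Sigma U D)
     \<longleftrightarrow> (\<forall>i\<in>U. indep_rows (A i) {t\<in>R. js t = i} (D i))"
    (is "indep_rows ?M R _ \<longleftrightarrow> _")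
proof -
  have block_sum: "(\<Sum>t\<in>R. w t * (if js t = i then A i t j else 0))
      = (\<Sum>t\<in>{t\<in>R. js t = i}. w t * A i t j)" for w i j
    unfolding sum.inter_filter[OF assms(1)] by (intro sum.cong) auto
  show ?thesis
  proof
    assume ind: "indep_rows ?M R (Sigma U D)"
    show "\<forall>i\<in>U. indep_rows (A i) {t\<in>R. js t = i} (D i)"
    proof (intro ballI indep_rowsI)
      fix i w t
      assume H: "\<forall>j\<in>D i. (\<Sum>t\<in>{t\<in>R. js t = i}. w t * A i t j) = 0" and t: "t \<in> {t\<in>R. js t = i}"
      define w' where "w' t = (if js t = i then w t else 0)" for t
      have "(\<Sum>t\<in>{t\<in>R. js t = i'}. w' t * A i' t j) = 0" if "j \<in> D i'" for i' j
      proof (cases "i' = i")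
        case True
        then have "(\<Sum>t\<in>{t\<in>R. js t = i'}. w' t * A i' t j) = (\<Sum>t\<in>{t\<in>R. js t = i}. w t * A i t j)"
          by (intro sum.cong) (auto simp: w'_def)
        then show ?thesis using H that True by simp
      qed (auto simp: w'_def intro!: sum.neutral)
      then have "w' t = 0"
        using t by (intro indep_rowsD[OF ind, of w']) (auto simp: block_sum)
      then show "w t = 0" using t by (simp add: w'_def)
    qed
  next
    assume blocks: "\<forall>i\<in>U. indep_rows (A i) {t\<in>R. js t = i} (D i)"
    show "indep_rows ?M R (Sigma U D)"
    proof (rule indep_rowsI)
      fix w t assume H: "\<forall>p\<in>Sigma U D. (\<Sum>t\<in>R. w t * ?M t p) = 0" and t: "t \<in> R"
      have "(\<Sum>s\<in>{s\<in>R. js s = js t}. w s * A (js t) s j) = 0" if "j \<in> D (js t)" for j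
        using H[rule_format, of "(js t, j)"] assms(2)[OF t] that by (simp add: block_sum)
      moreover have "indep_rows (A (js t)) {s\<in>R. js s = js t} (D (js t))"
        using blocks assms(2)[OF t] by blast
      ultimately show "w t = 0" using t by (intro indep_rowsD[of "A (js t)" "{s\<in>R. js s = js t}" "D (js t)" w]) auto
    qed
  qed
qed

lemma det_mat_ne_0_iff_indep_rows:
  fixes g :: "nat \<times> nat \<Rightarrow> complex"
  shows "Determinant.det (mat n n g) \<noteq> 0 \<longleftrightarrow> indep_rows (\<lambda>t s. g (t, s)) {..<n} {..<n}"
proof -
  let ?A = "mat n n g"
  have "?A \<in> carrier_mat n n" by simp
  then have "Determinant.det ?A = Determinant.det (transpose_mat ?A)"
    by (rule det_transpose[symmetric])
  then have det_0: "Determinant.det ?A = 0 \<longleftrightarrow>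
      (\<exists>v. v \<in> carrier_vec n \<and> v \<noteq> 0\<^sub>v n \<and> transpose_mat ?A *\<^sub>v v = 0\<^sub>v n)"
    using det_0_iff_vec_prod_zero[of "transpose_mat ?A" n] by simp
  have prod: "(transpose_mat ?A *\<^sub>v v) $ s = (\<Sum>t<n. v $ t * g (t, s))"
    if "v \<in> carrier_vec n" "s < n" for v s
    using that by (simp add: scalar_prod_def lessThan_atLeast0 mult.commute)
  show ?thesis
  proof
    assume d: "Determinant.det ?A \<noteq> 0"
    show "indep_rows (\<lambda>t s. g (t, s)) {..<n} {..<n}"
    proof (rule indep_rowsI)
      fix w t assume H: "\<forall>s\<in>{..<n}. (\<Sum>t\<in>{..<n}. w t * g (t, s)) = 0" and t: "t \<in> {..<n}"
      have "transpose_mat ?A *\<^sub>v vec n w = 0\<^sub>v n"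
        by (rule eq_vecI) (use H prod[of "vec n w"] in auto)
      then have "vec n w = 0\<^sub>v n" using det_0 d vec_carrier[of n w] by blast
      then show "w t = 0" using t by (metis index_vec index_zero_vec(1) lessThan_iff)
    qed
  next
    assume ind: "indep_rows (\<lambda>t s. g (t, s)) {..<n} {..<n}"
    show "Determinant.det ?A \<noteq> 0"
    proof
      assume "Determinant.det ?A = 0"
      then obtain v where v: "v \<in> carrier_vec n" "v \<noteq> 0\<^sub>v n" "transpose_mat ?A *\<^sub>v v = 0\<^sub>v n"
        using det_0 by blast
      have "(\<Sum>t\<in>{..<n}. v $ t * g (t, s)) = 0" if "s \<in> {..<n}" for s
      proof -
        have "(transpose_mat ?A *\<^sub>v v) $ s = 0" using v(3) that by simp
        then show ?thesis using prod[OF v(1)] that by simp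
      qed
      then have "v $ t = 0" if "t < n" for t
        using that by (intro indep_rowsD[OF ind, of "\<lambda>t. v $ t"]) auto
      then have "v = 0\<^sub>v n" using v(1) by (intro eq_vecI) auto
      then show False using v(2) by simp
    qed
  qed
qed

lemma continuous_on_det_mat:
  assumes "\<And>t s. continuous_on S (\<lambda>h. g h (t, s) :: complex)"
  shows "continuous_on S (\<lambda>h. Determinant.det (mat n n (g h)))"
proof -
  have "Determinant.det (mat n n (g h)) =
      (\<Sum>p\<in>{p. p permutes {0..<n}}. signof p * (\<Prod>i = 0..<n. g h (i, p i)))" for h
  proof -
    have "Determinant.det (mat n n (g h)) =
        (\<Sum>p\<in>{p. p permutes {0..<n}}. signof p * (\<Prod>i = 0..<n. mat n n (g h) $$ (i, p i)))"
      by (rule det_def') simp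
    also have "\<dots> = (\<Sum>p\<in>{p. p permutes {0..<n}}. signof p * (\<Prod>i = 0..<n. g h (i, p i)))"
    proof (intro sum.cong refl arg_cong2[where f = "(*)"] prod.cong)
      fix p i assume "p \<in> {p. p permutes {0..<n}}" "i \<in> {0..<n}"
      then show "mat n n (g h) $$ (i, p i) = g h (i, p i)"
        using permutes_in_image by fastforce
    qed
    finally show ?thesis .
  qed
  then show ?thesis by (simp only:) (intro continuous_intros assms)
qed

abbreviation chan_coords :: "nat \<Rightarrow> nat \<Rightarrow> (nat \<times> nat \<times> nat) set" where
  "chan_coords K L \<equiv> {..<K} \<times> {..<K} \<times> {..<L}"

lemma space_chan_measure: "space (chan_measure K L) = (\<Pi>\<^sub>E v\<in>chan_coords K L. UNIV)"
  unfolding chan_measure_def by (simp add: space_PiM)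

lemma chan_measure_box:
  assumes "\<And>v. v \<in> chan_coords K L \<Longrightarrow> X v \<in> sets borel"
  shows "(\<Pi>\<^sub>E v\<in>chan_coords K L. X v) \<in> sets (chan_measure K L)"
    and "emeasure (chan_measure K L) (\<Pi>\<^sub>E v\<in>chan_coords K L. X v)
      = (\<Prod>v\<in>chan_coords K L. emeasure lborel (X v))"
proof -
  interpret product_sigma_finite "\<lambda>_. lborel :: complex measure"
    by (simp add: product_sigma_finite_def sigma_finite_lborel)
  show "(\<Pi>\<^sub>E v\<in>chan_coords K L. X v) \<in> sets (chan_measure K L)"
    unfolding chan_measure_def by (rule sets_PiM_I_finite) (use assms in auto)
  show "emeasure (chan_measure K L) (\<Pi>\<^sub>E v\<in>chan_coords K L. X v)
      = (\<Prod>v\<in>chan_coords K L. emeasure lborel (X v))"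
    unfolding chan_measure_def by (rule emeasure_PiM) (use assms in auto)
qed

lemma prod_ennreal_pos:
  fixes f :: "'a \<Rightarrow> ennreal"
  assumes "finite A" "\<And>a. a \<in> A \<Longrightarrow> 0 < f a"
  shows "0 < (\<Prod>a\<in>A. f a)"
  using assms by (induct rule: finite_induct) (auto simp: ennreal_zero_less_mult_iff)

lemma emeasure_lborel_open_pos:
  fixes X :: "'a::euclidean_space set"
  assumes "open X" "z \<in> X"
  shows "0 < emeasure lborel X"
proof -
  obtain r where r: "r > 0" "ball z r \<subseteq> X" using assms open_contains_ball by blast
  have "0 < emeasure lborel (ball z r)"
    using r(1) by (simp add: emeasure_ball)
  also have "\<dots> \<le> emeasure lborel X"
    using r(2) assms(1) by (intro emeasure_mono) auto
  finally show ?thesis .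
qed

lemma AE_chan_measure_nonzero: "AE h in chan_measure K L. \<forall>v\<in>chan_coords K L. h v \<noteq> 0"
proof (intro AE_finite_allI AE_I')
  fix v assume v: "v \<in> chan_coords K L"
  let ?Z = "\<Pi>\<^sub>E u\<in>chan_coords K L. if u = v then {0} else UNIV"
  have "emeasure (chan_measure K L) ?Z = (\<Prod>u\<in>chan_coords K L. emeasure lborel (if u = v then {0::complex} else UNIV))"
    by (rule chan_measure_box) auto
  also have "\<dots> = 0"
    using v by (intro prod_zero) (auto intro!: bexI[of _ v])
  finally show "?Z \<in> null_sets (chan_measure K L)"
    by (intro null_setsI chan_measure_box) auto
  show "{h \<in> space (chan_measure K L). \<not> h v \<noteq> 0} \<subseteq> ?Z"
  proof
    fix h assume "h \<in> {h \<in> space (chan_measure K L). \<not> h v \<noteq> 0}"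
    then have h: "h \<in> (\<Pi>\<^sub>E u\<in>chan_coords K L. UNIV)" "h v = 0"
      by (auto simp: space_chan_measure)
    show "h \<in> ?Z"
    proof (rule PiE_I)
      fix u assume "u \<notin> chan_coords K L"
      then show "h u = undefined" by (rule PiE_arb[OF h(1)])
    qed (use h in auto)
  qed
qed simp

lemma AE_ex_in_pos_measure:
  assumes "AE x in M. P x" "S \<in> sets M" "0 < emeasure M S"
  shows "\<exists>x\<in>S. P x"
proof (rule ccontr)
  assume "\<not> (\<exists>x\<in>S. P x)"
  moreover obtain N where N: "{x \<in> space M. \<not> P x} \<subseteq> N" "emeasure M N = 0" "N \<in> sets M"
    using assms(1) by (rule AE_E)
  ultimately have "S \<subseteq> N" using sets.sets_into_space[OF assms(2)] by blast
  then have "emeasure M S \<le> emeasure M N" using N(3) by (intro emeasure_mono)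
  then show False using N(2) assms(3) by simp
qed

text \<open>This replaces the fact that the zero set of a nonzero polynomial is null: a nonzero value
  of a continuous function persists on an open box around the point, and such a box has positive
  measure.\<close>

lemma AE_chan_measure_ex_nonzero:
  fixes F :: "(nat \<times> nat \<times> nat \<Rightarrow> complex) \<Rightarrow> complex"
  assumes AE: "AE h in chan_measure K L. P h" and cont: "continuous_on UNIV F"
    and h1: "h1 \<in> space (chan_measure K L)" "F h1 \<noteq> 0"
  shows "\<exists>h. P h \<and> F h \<noteq> 0"
proof -
  have "open {h. F h \<noteq> 0}"
    using open_Collect_neq[OF cont continuous_on_const] by simp
  then have "openin (product_topology (\<lambda>_. euclidean) UNIV) {h. F h \<noteq> 0}"
    by (simp add: open_fun_def)
  then have "\<exists>X. h1 \<in> (\<Pi>\<^sub>E v\<in>UNIV. X v) \<and> (\<forall>v. openin euclidean (X v)) \<and>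
      finite {v. X v \<noteq> topspace euclidean} \<and> (\<Pi>\<^sub>E v\<in>UNIV. X v) \<subseteq> {h. F h \<noteq> 0}"
    by (rule product_topology_open_contains_basis) (simp add: h1(2))
  then obtain X where X: "h1 \<in> (\<Pi>\<^sub>E v\<in>UNIV. X v)" "\<And>v. open (X v)"
      "(\<Pi>\<^sub>E v\<in>UNIV. X v) \<subseteq> {h. F h \<noteq> 0}"
    by auto
  define S where "S = (\<Pi>\<^sub>E v\<in>chan_coords K L. X v)"
  have "S \<in> sets (chan_measure K L)"
    unfolding S_def using X(2) by (intro chan_measure_box) simp
  moreover have "0 < emeasure (chan_measure K L) S"
    unfolding S_def using X(1,2)
    by (subst chan_measure_box) (auto intro!: prod_ennreal_pos emeasure_lborel_open_pos)
  ultimately obtain h where h: "h \<in> S" "P h"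
    using AE_ex_in_pos_measure[OF AE] by blast
  have "h v \<in> X v" for v
  proof (cases "v \<in> chan_coords K L")
    case True
    then show ?thesis using h(1) unfolding S_def by (rule PiE_mem[rotated])
  next
    case False
    then have "h v = h1 v"
      using PiE_arb[OF h(1)[unfolded S_def]] PiE_arb[OF h1(1)[unfolded space_chan_measure]] by simp
    then show ?thesis using X(1) by auto
  qed
  then have "h \<in> (\<Pi>\<^sub>E v\<in>UNIV. X v)" by (simp add: PiE_iff)
  then show ?thesis using X(3) h(2) by blast
qed

lemma AE_chan_measure_ex:
  assumes "AE h in chan_measure K L. P h"
  shows "\<exists>h. P h"
proof -
  have "restrict (\<lambda>_. 0) (chan_coords K L) \<in> space (chan_measure K L)"
    by (simp add: space_chan_measure)
  then show ?thesis
    using AE_chan_measure_ex_nonzero[OF assms continuous_on_const, of _ 1] by auto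
qed

text \<open>Row t of the L x Kd matrix [H_{l,1}Q_1 ... H_{l,K}Q_K] seen by receiver l; the columns are
  indexed by pairs (user, stream).\<close>

definition eff_chan :: "(nat \<times> nat \<times> nat \<Rightarrow> complex) \<Rightarrow> (nat \<Rightarrow> nat \<Rightarrow> nat \<Rightarrow> complex)
    \<Rightarrow> nat \<Rightarrow> nat \<Rightarrow> nat \<times> nat \<Rightarrow> complex" where
  "eff_chan h Q l t = (\<lambda>(i, j). h (l, i, t) * Q i t j)"

lemma sum_HQc_eq_eff_chan:
  assumes "finite U"
  shows "(\<Sum>i\<in>U. HQc d h Q l i (c i) t) = (\<Sum>p\<in>U \<times> {..<d}. eff_chan h Q l t p * c (fst p) (snd p))"
proof -
  have "(\<Sum>i\<in>U. HQc d h Q l i (c i) t) = (\<Sum>i\<in>U. \<Sum>j<d. eff_chan h Q l t (i, j) * c i j)"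
    unfolding HQc_def eff_chan_def by (simp add: sum_distrib_left mult.assoc)
  also have "\<dots> = (\<Sum>p\<in>U \<times> {..<d}. eff_chan h Q l t p * c (fst p) (snd p))"
    using assms by (subst sum.Sigma) (auto simp: split_beta)
  finally show ?thesis .
qed

lemma cond_a_imp_indep_rows:
  assumes "cond_a K L d h Q l"
  shows "indep_rows (eff_chan h Q l) {..<L} ({..<K} \<times> {..<d})"
proof (rule indep_rows_if_solvable)
  fix y
  obtain c where "\<forall>t<L. y t = (\<Sum>i<K. HQc d h Q l i (c i) t)"
    using assms unfolding cond_a_def by blast
  then show "\<exists>x. \<forall>t\<in>{..<L}. (\<Sum>p\<in>{..<K} \<times> {..<d}. eff_chan h Q l t p * x p) = y t"
    by (intro exI[of _ "\<lambda>p. c (fst p) (snd p)"]) (simp add: sum_HQc_eq_eff_chan)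
qed simp

lemma interference_spans_if_indep_rows:
  assumes "finite U" "SS \<subseteq> U \<times> {..<d}" "indep_rows (eff_chan h Q l) {..<L} SS"
  shows "\<exists>c. \<forall>t<L. y t = (\<Sum>i\<in>U. HQc d h Q l i (c i) t)"
proof -
  have "finite SS" using assms(1,2) finite_subset by blast
  then obtain x where x: "\<forall>t\<in>{..<L}. (\<Sum>p\<in>SS. eff_chan h Q l t p * x p) = y t"
    using indep_rows_solvable[OF finite_lessThan _ assms(3)] by blast
  define c where "c i j = (if (i, j) \<in> SS then x (i, j) else 0)" for i j
  have "y t = (\<Sum>i\<in>U. HQc d h Q l i (c i) t)" if "t < L" for t
  proof -
    have "(\<Sum>i\<in>U. HQc d h Q l i (c i) t) = (\<Sum>p\<in>U \<times> {..<d}. eff_chan h Q l t p * c (fst p) (snd p))"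
      using assms(1) by (rule sum_HQc_eq_eff_chan)
    also have "\<dots> = (\<Sum>p\<in>SS. eff_chan h Q l t p * x p)"
      using assms(1,2) by (intro sum.mono_neutral_cong_right) (auto simp: c_def)
    finally show ?thesis using x that by simp
  qed
  then show ?thesis by (intro exI[of _ c]) blast
qed

lemma cond_b_imp_pos: "cond_b K L d h Q l \<Longrightarrow> 0 < d"
  by (cases d) (auto simp: cond_b_def HQc_def)

lemma square_block_subsystem:
  fixes Q :: "nat \<Rightarrow> nat \<Rightarrow> nat \<Rightarrow> complex" and d :: nat
  assumes "finite U" "\<And>t. t < L \<Longrightarrow> js t \<in> U"
    and blocks: "\<And>i. i \<in> U \<Longrightarrow> indep_rows (Q i) {t. t < L \<and> js t = i} {..<d}"
  obtains SS where "SS \<subseteq> U \<times> {..<d}" "card SS = L"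
    "indep_rows (\<lambda>t (i, j). if js t = i then Q i t j else 0) {..<L} SS"
proof -
  define J where "J i = {t\<in>{..<L}. js t = i}" for i
  have "\<exists>C. C \<subseteq> {..<d} \<and> indep_rows (Q i) (J i) C \<and> card C = card (J i)" if i: "i \<in> U" for i
  proof -
    obtain C where "C \<subseteq> {..<d}" "indep_rows (Q i) (J i) C" "card C = card (J i)"
      by (rule indep_rows_square_subcols[of "J i" "{..<d}" "Q i"])
        (use blocks[OF i] in \<open>auto simp: J_def\<close>)
    then show ?thesis by blast
  qed
  then obtain Cf where Cf: "\<And>i. i \<in> U \<Longrightarrow>
      Cf i \<subseteq> {..<d} \<and> indep_rows (Q i) (J i) (Cf i) \<and> card (Cf i) = card (J i)"
    by metis
  have finite_Cf: "finite (Cf i)" if "i \<in> U" for i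
    using Cf[OF that] finite_subset by blast
  have "card (Sigma U Cf) = (\<Sum>i\<in>U. card (J i))"
    using assms(1) finite_Cf Cf by (simp add: card_SigmaI)
  also have "\<dots> = card (\<Union>i\<in>U. J i)"
    by (rule card_UN_disjoint[symmetric]) (use assms(1) in \<open>auto simp: J_def\<close>)
  also have "(\<Union>i\<in>U. J i) = {..<L}"
    using assms(2) by (auto simp: J_def)
  finally have "card (Sigma U Cf) = L" by simp
  moreover have "indep_rows (\<lambda>t (i, j). if js t = i then Q i t j else 0) {..<L} (Sigma U Cf)"
    using Cf assms(2) by (subst indep_rows_block_iff) (auto simp: J_def)
  moreover have "Sigma U Cf \<subseteq> U \<times> {..<d}" using Cf by blast
  ultimately show ?thesis using that by blast
qed

text \<open>If all rows can be attributed to interferers with independent blocks, then for generic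
  channels the interference alone spans the whole signal space at receiver l; the witness channel
  is the 0/1 pattern of the attribution, where the relevant square matrix is block diagonal.\<close>

lemma interference_cover_contradicts_cond_b:
  assumes AE: "AE h in chan_measure K L. cond_b K L d h Q l" and "l < K"
    and js: "\<And>t. t < L \<Longrightarrow> js t \<in> {..<K} - {l}"
    and blocks: "\<And>i. i \<in> {..<K} - {l} \<Longrightarrow> indep_rows (Q i) {t. t < L \<and> js t = i} {..<d}"
  shows False
proof -
  let ?U = "{..<K} - {l}"
  obtain SS where SS: "SS \<subseteq> ?U \<times> {..<d}" "card SS = L"
    and block_diag: "indep_rows (\<lambda>t (i, j). if js t = i then Q i t j else 0) {..<L} SS"
    by (rule square_block_subsystem[of ?U L js Q d]) (use js blocks in auto)
  have "finite SS" using SS(1) finite_subset by blast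
  then obtain \<pi> where \<pi>: "bij_betw \<pi> {..<L} SS"
    using ex_bij_betw_nat_finite SS(2) by (metis atLeast0LessThan)
  define F where "F h = Determinant.det (mat L L (\<lambda>(t, s). eff_chan h Q l t (\<pi> s)))" for h
  have F_iff: "F h \<noteq> 0 \<longleftrightarrow> indep_rows (eff_chan h Q l) {..<L} SS" for h
    unfolding F_def det_mat_ne_0_iff_indep_rows using indep_rows_reindex_cols[OF \<pi>] by simp
  define h1 where "h1 = restrict (\<lambda>(l', i, t). if js t = i then 1 else 0 :: complex) (chan_coords K L)"
  have h1: "h1 \<in> space (chan_measure K L)"
    by (simp add: h1_def space_chan_measure)
  have "indep_rows (eff_chan h1 Q l) {..<L} SS"
    using block_diag by (rule indep_rows_cong) (use SS(1) \<open>l < K\<close> in \<open>auto simp: eff_chan_def h1_def\<close>)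
  then have "F h1 \<noteq> 0" by (simp add: F_iff)
  moreover have "continuous_on UNIV F"
    unfolding F_def eff_chan_def
    by (intro continuous_on_det_mat) (simp add: split_beta continuous_on_product_coordinates continuous_on_mult_right)
  ultimately obtain h where h: "cond_b K L d h Q l" "F h \<noteq> 0"
    using AE_chan_measure_ex_nonzero[OF AE _ h1] by blast
  then obtain c where "\<not> (\<exists>c'. \<forall>t<L. HQc d h Q l l c t = (\<Sum>i\<in>?U. HQc d h Q l i (c' i) t))"
    unfolding cond_b_def by blast
  moreover have "\<exists>c'. \<forall>t<L. HQc d h Q l l c t = (\<Sum>i\<in>?U. HQc d h Q l i (c' i) t)"
    using SS(1) h(2) by (intro interference_spans_if_indep_rows) (auto simp: F_iff)
  ultimately show False by blast
qed

lemma row_assignment_if_cond_a: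
  assumes "cond_a K L d h Q l" "\<And>i t. i < K \<Longrightarrow> t < L \<Longrightarrow> h (l, i, t) \<noteq> 0"
  obtains sel where "\<And>t. t < L \<Longrightarrow> sel t < K"
    "\<And>i. i < K \<Longrightarrow> indep_rows (Q i) {t. t < L \<and> sel t = i} {..<d}"
proof -
  define g where "g i t = (\<lambda>(i', j). if i = i' then eff_chan h Q l t (i', j) else 0)" for i t
  have "\<forall>t\<in>{..<L}. \<forall>p\<in>{..<K} \<times> {..<d}. eff_chan h Q l t p = (\<Sum>i\<in>{..<K}. g i t p)"
    by (auto simp: g_def)
  then obtain sel where sel: "\<forall>t\<in>{..<L}. sel t \<in> {..<K}"
      "indep_rows (\<lambda>t. g (sel t) t) {..<L} ({..<K} \<times> {..<d})"
    using indep_rows_select_summands[OF finite_lessThan cond_a_imp_indep_rows[OF assms(1)]] by blast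
  have "indep_rows (\<lambda>t (i, j). if sel t = i then h (l, i, t) * Q i t j else 0) {..<L} (Sigma {..<K} (\<lambda>_. {..<d}))"
    using sel(2) by (rule indep_rows_cong) (auto simp: g_def eff_chan_def)
  then have blocks: "indep_rows (\<lambda>t j. h (l, i, t) * Q i t j) {t. t < L \<and> sel t = i} {..<d}"
    if "i < K" for i
    using sel(1) that by (subst (asm) indep_rows_block_iff) auto
  have "indep_rows (Q i) {t. t < L \<and> sel t = i} {..<d}" if "i < K" for i
    using blocks[OF that] indep_rows_scale_rows[of "{t. t < L \<and> sel t = i}" "\<lambda>t. h (l, i, t)"]
      assms(2) that by auto
  with sel(1) that show ?thesis by blast
qed

lemma full_col_rank_extend_indep_rows:
  assumes "full_col_rank L d M" "T \<subseteq> {..<L}" "indep_rows M T {..<d}"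
  obtains B where "T \<subseteq> B" "B \<subseteq> {..<L}" "indep_rows M B {..<d}" "d \<le> card B"
proof -
  obtain B where B: "T \<subseteq> B" "B \<subseteq> {..<L}" "indep_rows M B {..<d}"
      "\<forall>t\<in>{..<L}. \<exists>a. \<forall>j\<in>{..<d}. M t j = (\<Sum>s\<in>B. a s * M s j)"
    using finite_lessThan assms(2,3) by (rule indep_rows_extend_basis)
  have "indep_rows (\<lambda>j t. M t j) {..<d} {..<L}"
    using assms(1) unfolding full_col_rank_def indep_rows_def by (simp add: mult.commute)
  then have "card {..<d} \<le> card B"
    using B(2,4) by (intro indep_cols_card_le_spanning_rows) (auto intro: finite_subset)
  with B that show ?thesis by simp
qed

text \<open>Otherwise every row could be attributed to an interferer of user l.\<close>

lemma private_row_exists: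
  assumes AE: "AE h in chan_measure K L. cond_b K L d h Q l" and "l < K"
    and sel: "\<And>t. t < L \<Longrightarrow> sel t < K"
    and B: "\<And>i. i < K \<Longrightarrow>
      {t. t < L \<and> sel t = i} \<subseteq> B i \<and> B i \<subseteq> {..<L} \<and> indep_rows (Q i) (B i) {..<d}"
  shows "\<exists>e. e < L \<and> sel e = l \<and> (\<forall>i<K. i \<noteq> l \<longrightarrow> e \<notin> B i)"
proof (rule ccontr)
  assume "\<not> ?thesis"
  then have cover: "\<exists>i. i < K \<and> i \<noteq> l \<and> t \<in> B i" if "t < L" "sel t = l" for t
    using that by blast
  define js where "js t = (if sel t \<noteq> l then sel t else (SOME i. i < K \<and> i \<noteq> l \<and> t \<in> B i))" for t
  have js: "js t \<in> {..<K} - {l} \<and> t \<in> B (js t)" if "t < L" for t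
  proof (cases "sel t = l")
    case True
    then show ?thesis using someI_ex[OF cover[OF that True]] by (simp add: js_def)
  next
    case False
    then show ?thesis using sel[OF that] B[of "sel t"] that by (auto simp: js_def)
  qed
  have "indep_rows (Q i) {t. t < L \<and> js t = i} {..<d}" if "i \<in> {..<K} - {l}" for i
  proof (rule indep_rows_subset)
    show "finite (B i)" using B[of i] that finite_subset by blast
    show "indep_rows (Q i) (B i) {..<d}" using B[of i] that by blast
    show "{t. t < L \<and> js t = i} \<subseteq> B i" using js by blast
  qed
  then show False using interference_cover_contradicts_cond_b[OF AE \<open>l < K\<close>] js by blast
qed

lemma achievable_imp_streams_le:
  assumes "achievable K L d" "1 \<le> K"
  shows "0 < d \<and> d + K \<le> L + 1"
proof -
  obtain Q where rank: "\<forall>i<K. full_col_rank L d (Q i)"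
    and AE: "AE h in chan_measure K L. \<forall>l<K. cond_a K L d h Q l \<and> cond_b K L d h Q l"
    using assms(1) unfolding achievable_def by blast
  obtain h where h: "\<forall>l<K. cond_a K L d h Q l \<and> cond_b K L d h Q l"
      "\<forall>v\<in>chan_coords K L. h v \<noteq> 0"
    using AE_chan_measure_ex[OF AE_conjI[OF AE AE_chan_measure_nonzero]] by blast
  have "0 < d" using h(1) assms(2) cond_b_imp_pos by auto
  obtain sel where sel: "\<And>t. t < L \<Longrightarrow> sel t < K"
      "\<And>i. i < K \<Longrightarrow> indep_rows (Q i) {t. t < L \<and> sel t = i} {..<d}"
    by (rule row_assignment_if_cond_a[of K L d h Q 0]) (use h assms(2) in auto)
  have "\<exists>B. {t. t < L \<and> sel t = i} \<subseteq> B \<and> B \<subseteq> {..<L} \<and> indep_rows (Q i) B {..<d} \<and> d \<le> card B"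
    if "i < K" for i
    by (rule full_col_rank_extend_indep_rows[of L d "Q i" "{t. t < L \<and> sel t = i}"])
      (use rank sel(2) that in auto)
  then obtain B where B: "\<And>i. i < K \<Longrightarrow> {t. t < L \<and> sel t = i} \<subseteq> B i \<and> B i \<subseteq> {..<L}
      \<and> indep_rows (Q i) (B i) {..<d} \<and> d \<le> card (B i)"
    by metis
  have "\<exists>e. e < L \<and> sel e = l \<and> (\<forall>i<K. i \<noteq> l \<longrightarrow> e \<notin> B i)" if "l < K" for l
    using AE that sel(1) B by (intro private_row_exists) (auto elim: AE_mp)
  then obtain e where e: "\<And>l. l < K \<Longrightarrow> e l < L \<and> sel (e l) = l \<and> (\<forall>i<K. i \<noteq> l \<longrightarrow> e l \<notin> B i)"
    by metis
  have "inj_on e {1..<K}"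
    by (rule inj_onI) (metis atLeastLessThan_iff e)
  moreover have "B 0 \<inter> e ` {1..<K} = {}" "B 0 \<union> e ` {1..<K} \<subseteq> {..<L}"
    using e B[of 0] assms(2) by auto
  ultimately have "card (B 0) + (K - 1) \<le> L"
    using card_mono[OF finite_lessThan \<open>B 0 \<union> _ \<subseteq> _\<close>] finite_subset[OF \<open>B 0 \<union> _ \<subseteq> _\<close>]
    by (simp add: card_Un_disjoint card_image)
  then show ?thesis using B[of 0] assms(2) \<open>0 < d\<close> by linarith
qed

text \<open>User i sends its first stream in the private slot i and its remaining L - K streams in the
  slots K, ..., L - 1 shared by all users.\<close>

definition prec :: "nat \<Rightarrow> nat \<Rightarrow> nat \<Rightarrow> nat \<Rightarrow> complex" where
  "prec K i t j = (if (j = 0 \<and> t = i) \<or> (1 \<le> j \<and> t = K + j - 1) then 1 else 0)"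

lemma sum_prec:
  assumes "i < K" "t < L" "K \<le> L"
  shows "(\<Sum>j<L - K + 1. prec K i t j * x j) =
    (if t < K then (if t = i then x 0 else 0) else x (t - K + 1))"
proof -
  have "(\<Sum>j<L - K + 1. prec K i t j * x j) =
      (\<Sum>j<L - K + 1. if j = (if t < K then 0 else t - K + 1) \<and> (t < K \<longrightarrow> t = i) then x j else 0)"
    using assms by (intro sum.cong) (auto simp: prec_def)
  also have "\<dots> = (if t < K then (if t = i then x 0 else 0) else x (t - K + 1))"
    using assms by (auto simp: sum.delta' cong: conj_cong)
  finally show ?thesis .
qed

lemma HQc_prec:
  assumes "i < K" "t < L" "K \<le> L"
  shows "HQc (L - K + 1) h (prec K) l i c t =
    h (l, i, t) * (if t < K then (if t = i then c 0 else 0) else c (t - K + 1))"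
  unfolding HQc_def by (simp only: sum_prec[OF assms])

lemma full_col_rank_prec:
  assumes "i < K" "K \<le> L"
  shows "full_col_rank L (L - K + 1) (prec K i)"
  unfolding full_col_rank_def
proof (intro allI impI)
  fix c j assume H: "\<forall>t<L. (\<Sum>j<L - K + 1. prec K i t j * c j) = 0" and j: "j < L - K + 1"
  \<comment> \<open>Stream j is the only one present in slot i (for j = 0) or in slot K + j - 1.\<close>
  define t where "t = (if j = 0 then i else K + j - 1)"
  have t: "t < L" using assms j by (auto simp: t_def)
  moreover have "(if t < K then (if t = i then c 0 else 0) else c (t - K + 1)) = c j"
    using assms j by (auto simp: t_def)
  ultimately show "c j = 0" using H sum_prec[OF assms(1) t assms(2), of c] by auto
qed

lemma cond_a_prec:
  assumes "1 \<le> K" "K \<le> L" "l < K" "\<And>i t. i < K \<Longrightarrow> t < L \<Longrightarrow> h (l, i, t) \<noteq> 0"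
  shows "cond_a K L (L - K + 1) h (prec K) l"
  unfolding cond_a_def
proof
  fix y
  \<comment> \<open>Slot t < K is served by the private stream of user t, the shared slots by user 0.\<close>
  define c where "c i j = (if j = 0 then y i / h (l, i, i)
      else if i = 0 then y (K + j - 1) / h (l, 0, K + j - 1) else 0)" for i j
  have "y t = (\<Sum>i<K. HQc (L - K + 1) h (prec K) l i (c i) t)" if t: "t < L" for t
  proof (cases "t < K")
    case True
    have "HQc (L - K + 1) h (prec K) l i (c i) t = (if i = t then y t else 0)" if "i < K" for i
      using HQc_prec[OF that t assms(2), of h l "c i"] True assms(4)[OF \<open>t < K\<close> t]
      by (auto simp: c_def)
    then show ?thesis using True by simp
  next
    case False
    have "HQc (L - K + 1) h (prec K) l i (c i) t = (if i = 0 then y t else 0)" if "i < K" for i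
      using HQc_prec[OF that t assms(2), of h l "c i"] False assms(1,2) assms(4)[of 0 t] t
      by (auto simp: c_def)
    then show ?thesis using assms(1) by simp
  qed
  then show "\<exists>c. \<forall>t<L. y t = (\<Sum>i<K. HQc (L - K + 1) h (prec K) l i (c i) t)" by blast
qed

lemma cond_b_prec:
  assumes "K \<le> L" "l < K" "h (l, l, l) \<noteq> 0"
  shows "cond_b K L (L - K + 1) h (prec K) l"
  unfolding cond_b_def
proof (intro exI notI)
  \<comment> \<open>The private stream of user l is alone in slot l.\<close>
  let ?c = "\<lambda>j. if j = 0 then (1::complex) else 0"
  have l: "l < L" using assms(1,2) by simp
  assume "\<exists>c'. \<forall>t<L. HQc (L - K + 1) h (prec K) l l ?c t
    = (\<Sum>i\<in>{..<K} - {l}. HQc (L - K + 1) h (prec K) l i (c' i) t)"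
  then obtain c' where c': "HQc (L - K + 1) h (prec K) l l ?c l
      = (\<Sum>i\<in>{..<K} - {l}. HQc (L - K + 1) h (prec K) l i (c' i) l)"
    using l by blast
  have "HQc (L - K + 1) h (prec K) l l ?c l = h (l, l, l)"
    using HQc_prec[OF assms(2) l assms(1), of h l ?c] assms(2) by simp
  moreover have "HQc (L - K + 1) h (prec K) l i (c' i) l = 0" if "i \<in> {..<K} - {l}" for i
    using HQc_prec[of i K l L h l "c' i"] that assms(1,2) by simp
  ultimately show False using c' assms(3) by simp
qed

lemma achievable_prec:
  assumes "1 \<le> K" "K \<le> L"
  shows "achievable K L (L - K + 1)"
  unfolding achievable_def
proof (intro exI conjI allI impI)
  show "full_col_rank L (L - K + 1) (prec K i)" if "i < K" for i
    using that assms(2) by (rule full_col_rank_prec)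
  show "AE h in chan_measure K L. \<forall>l<K. cond_a K L (L - K + 1) h (prec K) l \<and> cond_b K L (L - K + 1) h (prec K) l"
    using AE_chan_measure_nonzero
  proof (rule eventually_mono, intro allI impI conjI)
    fix h :: "nat \<times> nat \<times> nat \<Rightarrow> complex" and l assume nz: "\<forall>v\<in>chan_coords K L. h v \<noteq> 0" and "l < K"
    then show "cond_a K L (L - K + 1) h (prec K) l"
      using assms by (intro cond_a_prec) auto
    show "cond_b K L (L - K + 1) h (prec K) l"
      using nz \<open>l < K\<close> assms by (intro cond_b_prec) auto
  qed
qed

theorem corollary4:
  fixes K L :: nat
  assumes "K \<ge> 1" and "L \<ge> 1"
  shows "if K \<le> L then (real L - real K + 1) / real L \<in> SpAC_set K L \<and>
              (\<forall>s\<in>SpAC_set K L. s \<le> (real L - real K + 1) / real L)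
         else SpAC_set K L = {}"
proof -
  have bound: "0 < d \<and> real d \<le> real L - real K + 1" if "achievable K L d" for d
    using achievable_imp_streams_le[OF that assms(1)] by linarith
  show ?thesis
  proof (cases "K \<le> L")
    case True
    then have "real (L - K + 1) = real L - real K + 1" by (simp add: of_nat_diff)
    then have "(real L - real K + 1) / real L \<in> SpAC_set K L"
      unfolding SpAC_set_def using achievable_prec[OF assms(1) True] by force
    moreover have "s \<le> (real L - real K + 1) / real L" if "s \<in> SpAC_set K L" for s
      using that bound assms(2) unfolding SpAC_set_def by (auto intro: divide_right_mono)
    ultimately show ?thesis using True by simp
  next
    case False
    then have "\<not> achievable K L d" for d using bound[of d] by linarith
    then show ?thesis using False unfolding SpAC_set_def by simp
  qed
qed

end
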